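(* Assume $\mathrm{recc}(C)\subseteq\mathrm{recc}(P^B)$. Fix $k\in N_2$ and assume $N_0\not\subseteq J$. If $M'=\emptyset$, then $\mathrm{cl}\,\mathrm{conv}(P^B\setminus S_k^C)=P^B$.
   Context: Let $A\in\mathbb{R}^{m\times n}$ have full row rank, $b\in\mathbb{R}^m$, and $P=\{x\in\mathbb{R}^n_+:Ax=b\}$. Let $C\subseteq\mathbb{R}^n$ be an open convex set. Fix a basis $B$ of $P$ with nonbasic set $N=\{1,\dots,n\}\setminus B$. Write $P=\{x:x_i=\bar b_i-\sum_{j\in N}\bar a_{ij}x_j\ (i\in B),\ x\ge0\}$ with $\bar b\ge0$. The basic solution $\bar x$ has $\bar x_i=\bar b_i$ ($i\in B$) and $0$ ($i\in N$). $P^B$ is obtained by dropping $x_i\ge0$ for $i\in B$. For $j\in N$, $\bar r^j$ has $\bar r^j_k=-\bar a_{kj}$ ($k\in B$), $\bar r^j_j=1$, and $0$ otherwise. Thus $P^B=\{\bar x+\sum_{j\in N}x_j\bar r^j:x_j\ge0\}$. It is assumed that $\bar x\notin\mathrm{cl}(C)$. For $j\in N$, $\alpha_j=\inf\{\lambda\ge0:\bar x+\lambda\bar r^j\in C\}$ and $\beta_j=\sup\{\lambda\ge0:\bar x+\lambda\bar r^j\in C\}$, with $\alpha_j=+\infty$, $\beta_j=-\infty$ if the halfline misses $C$. Define - $N_0=\{j:\alpha_j=+\infty,\beta_j=-\infty\}$; - $N_2=\{j:\alpha_j\in(0,\infty),\beta_j\in(\alpha_j,\infty)\}$. For a set $K$,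 $\mathrm{recc}(K)=\{d:x+\lambda d\in K\ \forall x\in K,\lambda\ge0\}$. For $k\in N_2$, $S_k^C=\{\bar x\}+\mathrm{conv}\big(\bigcup_{j\in N_2}\{\lambda\bar r^j:0\le\lambda<\beta_j\}\big)+\{\lambda\bar r^k:\lambda\le0\}+\mathrm{recc}(C)$. Let $J=\{i\in N:\bar r^i\in\mathrm{recc}(S_k^C)\}$. For $i\in J$, $j\in N\setminus J$, $\gamma'_{ij}=\sup\{\gamma\ge0:\bar r^i+\gamma\bar r^j\in\mathrm{recc}(S_k^C)\}$. Let $M'=\{i\in J:\gamma'_{ij}>0\ \forall j\in N\setminus J\}$. Here $\mathrm{cl}\,\mathrm{conv}$ is the closure of the convex hull. *)

theory Defs
  imports "HOL-Analysis.Analysis" "HOL-Library.Extended_Real"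
begin

definition std_poly :: "real^'n^'m \<Rightarrow> real^'m \<Rightarrow> (real^'n) set" where
  "std_poly A b = {x. (\<forall>i. 0 \<le> x $ i) \<and> A *v x = b}"

definition basic_solution :: "real^'n^'m \<Rightarrow> real^'m \<Rightarrow> 'n set \<Rightarrow> real^'n" where
  "basic_solution A b B = (THE x. A *v x = b \<and> (\<forall>j. j \<notin> B \<longrightarrow> x $ j = 0))"

definition is_basis :: "real^'n^'m \<Rightarrow> real^'m \<Rightarrow> 'n set \<Rightarrow> bool" where
  "is_basis A b B \<longleftrightarrow> card B = CARD('m) \<and> inj_on (\<lambda>j. column j A) B
     \<and> independent ((\<lambda>j. column j A) ` B)
     \<and> (\<forall>i. 0 \<le> basic_solution A b B $ i)"

text \<open>The ray r^j (j nonbasic): r_j = 1, r_k = 0 for other nonbasic k, and the basic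
  components are - abar_{kj}, i.e. exactly those making A r = 0.\<close>

definition basis_ray :: "real^'n^'m \<Rightarrow> 'n set \<Rightarrow> 'n \<Rightarrow> real^'n" where
  "basis_ray A B j = (THE r. A *v r = 0 \<and> r $ j = 1 \<and> (\<forall>k. k \<notin> B \<and> k \<noteq> j \<longrightarrow> r $ k = 0))"

definition basis_relax :: "real^'n^'m \<Rightarrow> real^'m \<Rightarrow> 'n set \<Rightarrow> (real^'n) set" where
  "basis_relax A b B = {x. A *v x = b \<and> (\<forall>j. j \<notin> B \<longrightarrow> 0 \<le> x $ j)}"

definition recc :: "('a::real_vector) set \<Rightarrow> 'a set" where
  "recc K = {d. \<forall>x\<in>K. \<forall>t::real. 0 \<le> t \<longrightarrow> x + t *\<^sub>R d \<in> K}"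

text \<open>alpha_j, beta_j as extended reals: Inf of the empty set is +infinity, Sup of the
  empty set is -infinity, matching the stated conventions.\<close>

definition alpha_C :: "('a::real_vector) set \<Rightarrow> 'a \<Rightarrow> 'a \<Rightarrow> ereal" where
  "alpha_C C x r = Inf (ereal ` {t. 0 \<le> t \<and> x + t *\<^sub>R r \<in> C})"

definition beta_C :: "('a::real_vector) set \<Rightarrow> 'a \<Rightarrow> 'a \<Rightarrow> ereal" where
  "beta_C C x r = Sup (ereal ` {t. 0 \<le> t \<and> x + t *\<^sub>R r \<in> C})"

definition N0_set :: "real^'n^'m \<Rightarrow> real^'m \<Rightarrow> 'n set \<Rightarrow> (real^'n) set \<Rightarrow> 'n set" where
  "N0_set A b B C = {j. j \<notin> B \<and>
     alpha_C C (basic_solution A b B) (basis_ray A B j) = \<infinity> \<and>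
     beta_C C (basic_solution A b B) (basis_ray A B j) = -\<infinity>}"

definition N2_set :: "real^'n^'m \<Rightarrow> real^'m \<Rightarrow> 'n set \<Rightarrow> (real^'n) set \<Rightarrow> 'n set" where
  "N2_set A b B C = {j. j \<notin> B \<and>
     (let a = alpha_C C (basic_solution A b B) (basis_ray A B j);
          be = beta_C C (basic_solution A b B) (basis_ray A B j)
      in 0 < a \<and> a < \<infinity> \<and> a < be \<and> be < \<infinity>)}"

definition S_kC :: "real^'n^'m \<Rightarrow> real^'m \<Rightarrow> 'n set \<Rightarrow> (real^'n) set \<Rightarrow> 'n \<Rightarrow> (real^'n) set" where
  "S_kC A b B C k =
     {basic_solution A b B + y + \<mu> *\<^sub>R basis_ray A B k + d | y \<mu> d.
        y \<in> convex hull (\<Union>j\<in>N2_set A b B C.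
               {t *\<^sub>R basis_ray A B j | t. 0 \<le> t \<and>
                  ereal t < beta_C C (basic_solution A b B) (basis_ray A B j)})
        \<and> \<mu> \<le> 0 \<and> d \<in> recc C}"

definition J_set :: "real^'n^'m \<Rightarrow> real^'m \<Rightarrow> 'n set \<Rightarrow> (real^'n) set \<Rightarrow> 'n \<Rightarrow> 'n set" where
  "J_set A b B C k = {i. i \<notin> B \<and> basis_ray A B i \<in> recc (S_kC A b B C k)}"

definition gamma' :: "real^'n^'m \<Rightarrow> real^'m \<Rightarrow> 'n set \<Rightarrow> (real^'n) set \<Rightarrow> 'n \<Rightarrow> 'n \<Rightarrow> 'n \<Rightarrow> ereal" where
  "gamma' A b B C k i j = Sup (ereal ` {g. 0 \<le> g \<and>
      basis_ray A B i + g *\<^sub>R basis_ray A B j \<in> recc (S_kC A b B C k)})"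

definition M'_set :: "real^'n^'m \<Rightarrow> real^'m \<Rightarrow> 'n set \<Rightarrow> (real^'n) set \<Rightarrow> 'n \<Rightarrow> 'n set" where
  "M'_set A b B C k = {i \<in> J_set A b B C k. \<forall>j. j \<notin> B \<and> j \<notin> J_set A b B C k \<longrightarrow>
      gamma' A b B C k i j > 0}"

end

theory Submission
  imports Defs
begin

text \<open>
  Q = cl conv (P^B - S_k^C) is a closed convex subset of P^B = xbar + cone {r^j : j nonbasic},
  so it suffices to show that xbar lies in Q and that every r^j is a recession direction of Q.
  A point of S_k^C exceeds xbar by a vector bounded coordinatewise by the beta_j, a nonpositive
  multiple of r^k and a recession direction of C. So if xbar + t r^j lay in S_k^C for some t
  beyond that bound, the direction of C would put r^j into recc S_k^C (or, for j = k, r^k into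
  recc C, impossible as beta_k is finite). Hence for j not in J the halfline xbar + t r^j, t large,
  lies in Q, and a closed convex set recedes in the direction of every halfline it contains.
  For j in J, M' = {} provides a nonbasic j' not in J with r^j + g r^j' not in recc S_k^C for all
  g > 0; the same argument puts r^j + g r^j' into recc Q, and g -> 0 gives r^j. Finally, for j in
  N_0 - J no segment of S_k^C points along r^j, so xbar + e r^j lies in Q for every e > 0, and
  letting e -> 0 gives xbar in Q.
\<close>

lemma basis_columns_span:
  fixes A :: "real^'n^'m"
  assumes "is_basis A b B"
  shows "span ((\<lambda>j. column j A) ` B) = UNIV"
proof -
  let ?S = "(\<lambda>j. column j A) ` B"
  have "independent ?S" and "card ?S = CARD('m)"
    using assms by (auto simp: is_basis_def card_image)
  then have "UNIV \<subseteq> span ?S"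
    using card_eq_dim[of ?S UNIV] by auto
  then show ?thesis by auto
qed

lemma basis_solvable:
  fixes A :: "real^'n^'m"
  assumes "is_basis A b B"
  obtains x where "A *v x = u" "\<And>i. i \<notin> B \<Longrightarrow> x $ i = 0"
proof -
  let ?f = "\<lambda>j. column j A"
  have inj: "inj_on ?f B" using assms by (auto simp: is_basis_def)
  obtain c where c: "u = (\<Sum>w\<in>?f ` B. c w *\<^sub>R w)"
    using basis_columns_span[OF assms] span_finite[of "?f ` B"] by auto
  define x where "x = (\<chi> i. if i \<in> B then c (?f i) else 0)"
  have "A *v x = (\<Sum>i\<in>UNIV. (x $ i) *s column i A)" by (rule matrix_mult_sum)
  also have "\<dots> = (\<Sum>i\<in>B. c (?f i) *\<^sub>R ?f i)"
    by (rule sum.mono_neutral_cong_right) (auto simp: x_def scalar_mult_eq_scaleR)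
  also have "\<dots> = u" using c sum.reindex[OF inj, of "\<lambda>w. c w *\<^sub>R w"] by simp
  finally show ?thesis using that by (simp add: x_def)
qed

lemma basis_eqI:
  fixes A :: "real^'n^'m"
  assumes basis: "is_basis A b B" and eq: "A *v x = A *v y"
    and nonbasic: "\<And>i. i \<notin> B \<Longrightarrow> x $ i = y $ i"
  shows "x = y"
proof -
  let ?f = "\<lambda>j. column j A"
  define v where "v = x - y"
  have inj: "inj_on ?f B" and ind: "independent (?f ` B)"
    using basis by (auto simp: is_basis_def)
  define u where "u = (\<lambda>w. v $ inv_into B ?f w)"
  have "0 = (\<Sum>i\<in>UNIV. (v $ i) *s column i A)"
    using eq matrix_mult_sum[of A v] by (simp add: v_def matrix_vector_mult_diff_distrib)
  also have "\<dots> = (\<Sum>i\<in>B. u (?f i) *\<^sub>R ?f i)"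
    by (rule sum.mono_neutral_cong_right)
       (auto simp: v_def u_def nonbasic scalar_mult_eq_scaleR inv_into_f_f[OF inj])
  also have "\<dots> = (\<Sum>w\<in>?f ` B. u w *\<^sub>R w)"
    using sum.reindex[OF inj, of "\<lambda>w. u w *\<^sub>R w"] by simp
  finally have "v $ i = 0" if "i \<in> B" for i
    using independentD[OF ind, of "?f ` B" u "?f i"] that by (auto simp: u_def inv_into_f_f[OF inj])
  then show ?thesis using nonbasic by (auto simp: v_def vec_eq_iff)
qed

lemma basic_solution:
  fixes A :: "real^'n^'m"
  assumes "is_basis A b B"
  shows "A *v basic_solution A b B = b" and "\<And>i. i \<notin> B \<Longrightarrow> basic_solution A b B $ i = 0"
proof -
  have "\<exists>!x. A *v x = b \<and> (\<forall>j. j \<notin> B \<longrightarrow> x $ j = 0)"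
    by (rule ex_ex1I; metis basis_solvable[OF assms] basis_eqI[OF assms])
  from theI'[OF this]
  show "A *v basic_solution A b B = b" "\<And>i. i \<notin> B \<Longrightarrow> basic_solution A b B $ i = 0"
    unfolding basic_solution_def by blast+
qed

lemma basis_ray:
  fixes A :: "real^'n^'m"
  assumes basis: "is_basis A b B" and j: "j \<notin> B"
  shows "A *v basis_ray A B j = 0"
    and "\<And>i. i \<notin> B \<Longrightarrow> basis_ray A B j $ i = (if i = j then 1 else 0)"
proof -
  obtain x where x: "A *v x = - column j A" "\<And>i. i \<notin> B \<Longrightarrow> x $ i = 0"
    using basis_solvable[OF basis] by blast
  let ?r = "x + axis j 1"
  let ?P = "\<lambda>r. A *v r = 0 \<and> r $ j = 1 \<and> (\<forall>k. k \<notin> B \<and> k \<noteq> j \<longrightarrow> r $ k = 0)"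
  have "?P ?r"
    using x j by (simp add: matrix_vector_right_distrib matrix_vector_mult_basis) (simp add: axis_def)
  moreover have "r = ?r" if "?P r" for r
  proof (rule basis_eqI[OF basis])
    fix i assume "i \<notin> B"
    then show "r $ i = ?r $ i"
      using that \<open>?P ?r\<close> by (cases "i = j") (auto simp del: vector_add_component)
  qed (use that \<open>?P ?r\<close> in simp)
  ultimately have "\<exists>!r. ?P r" by blast
  from theI'[OF this] have "?P (basis_ray A B j)" unfolding basis_ray_def .
  then show "A *v basis_ray A B j = 0"
    and "\<And>i. i \<notin> B \<Longrightarrow> basis_ray A B j $ i = (if i = j then 1 else 0)"
    by auto
qed

lemma kernel_eq_sum_basis_rays:
  fixes A :: "real^'n^'m"
  assumes basis: "is_basis A b B" and v: "A *v v = 0"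
  shows "v = (\<Sum>i\<in>-B. (v $ i) *\<^sub>R basis_ray A B i)"
proof (rule basis_eqI[OF basis])
  show "A *v v = A *v (\<Sum>i\<in>-B. (v $ i) *\<^sub>R basis_ray A B i)"
    using v basis_ray(1)[OF basis] by (simp add: vec.sum matrix_vector_mult_scaleR)
  fix i assume i: "i \<notin> B"
  have "(\<Sum>l\<in>-B. v $ l * basis_ray A B l $ i) = (\<Sum>l\<in>-B. if l = i then v $ i else 0)"
    by (rule sum.cong) (auto simp: basis_ray(2)[OF basis _ i])
  then show "v $ i = (\<Sum>l\<in>-B. (v $ l) *\<^sub>R basis_ray A B l) $ i"
    using i by simp
qed

lemma recc_memD: "d \<in> recc K \<Longrightarrow> x \<in> K \<Longrightarrow> 0 \<le> t \<Longrightarrow> x + t *\<^sub>R d \<in> K"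
  by (simp add: recc_def)

lemma recc_add: "d \<in> recc K \<Longrightarrow> e \<in> recc K \<Longrightarrow> d + e \<in> recc K"
  unfolding recc_def by (simp add: scaleR_add_right flip: add.assoc)

lemma recc_scaleR: "d \<in> recc K \<Longrightarrow> 0 \<le> c \<Longrightarrow> c *\<^sub>R d \<in> recc K"
  unfolding recc_def by auto

lemma recc_scaleR_pos_iff: "0 < c \<Longrightarrow> c *\<^sub>R d \<in> recc K \<longleftrightarrow> d \<in> recc K"
  using recc_scaleR[of d K c] recc_scaleR[of "c *\<^sub>R d" K "1 / c"] by auto

lemma recc_sum: "(\<And>i. i \<in> F \<Longrightarrow> d i \<in> recc K) \<Longrightarrow> (\<Sum>i\<in>F. d i) \<in> recc K"
proof (induction F rule: infinite_finite_induct)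
  case (insert i F) then show ?case by (simp add: recc_add)
qed (auto simp: recc_def)

lemma closed_recc:
  fixes K :: "'a::real_normed_vector set"
  assumes "closed K"
  shows "closed (recc K)"
proof -
  have "recc K = (\<Inter>x\<in>K. \<Inter>t\<in>{0..}. (\<lambda>d. x + t *\<^sub>R d) -` K)"
    by (auto simp: recc_def)
  also have "closed \<dots>"
    using assms by (intro closed_INT ballI closed_vimage continuous_intros)
  finally show ?thesis .
qed

lemma closed_mem_if_eventually_at_right:
  fixes Q :: "'a::real_normed_vector set"
  assumes "closed Q" "\<forall>\<^sub>F e in at_right 0. x + e *\<^sub>R v \<in> Q"
  shows "x \<in> Q"
proof -
  have "((\<lambda>e. x + e *\<^sub>R v) \<longlongrightarrow> x + 0 *\<^sub>R v) (at_right 0)"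
    by (intro tendsto_intros)
  from Lim_in_closed_set[OF assms _ this] show ?thesis by simp
qed

lemma recc_if_halfline:
  fixes Q :: "'a::real_normed_vector set"
  assumes Q: "closed Q" "convex Q" and halfline: "\<And>s. s \<ge> s0 \<Longrightarrow> p + s *\<^sub>R v \<in> Q"
  shows "v \<in> recc Q"
  unfolding recc_def
proof (intro CollectI ballI allI impI)
  fix x and t :: real assume x: "x \<in> Q" and t: "0 \<le> t"
  show "x + t *\<^sub>R v \<in> Q"
  proof (cases "t = 0")
    case True with x show ?thesis by simp
  next
    case False
    \<comment> \<open>x + t v is the limit of the convex combinations (1 - l) x + l (p + (t / l) v) as l -> 0+\<close>
    define s1 where "s1 = max s0 1"
    have "\<forall>\<^sub>F l in at_right 0. (x + t *\<^sub>R v) + l *\<^sub>R (p - x) \<in> Q"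
      unfolding eventually_at_right_field
    proof (intro exI[of _ "min 1 (t / s1)"] conjI allI impI)
      show "(0::real) < min 1 (t / s1)" using t False by (simp add: s1_def)
      fix l :: real assume l: "0 < l" "l < min 1 (t / s1)"
      have s1: "0 < s1" "s0 \<le> s1" by (auto simp: s1_def)
      have "l * s0 \<le> l * s1" using l s1 by (simp add: mult_left_mono)
      also have "\<dots> < t" using l s1 by (simp add: pos_less_divide_eq mult.commute)
      finally have "s0 \<le> t / l" using l by (simp add: pos_le_divide_eq mult.commute)
      have "(1 - l) *\<^sub>R x + l *\<^sub>R (p + (t / l) *\<^sub>R v) \<in> Q"
        using convexD[OF Q(2) x halfline[OF \<open>s0 \<le> t / l\<close>], of "1 - l" l] l by simp
      then show "(x + t *\<^sub>R v) + l *\<^sub>R (p - x) \<in> Q"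
        using l by (simp add: algebra_simps)
    qed
    with Q(1) show ?thesis by (rule closed_mem_if_eventually_at_right)
  qed
qed

lemma closed_basis_relax: "closed (basis_relax A b B)"
  unfolding basis_relax_def
  by (intro closed_Collect_conj closed_Collect_all closed_Collect_imp closed_Collect_eq closed_Collect_le)
     (auto intro: continuous_intros)

lemma convex_basis_relax: "convex (basis_relax A b B)"
proof (rule convexI)
  fix x y and u v :: real
  assume "x \<in> basis_relax A b B" "y \<in> basis_relax A b B" "0 \<le> u" "0 \<le> v" "u + v = 1"
  then show "u *\<^sub>R x + v *\<^sub>R y \<in> basis_relax A b B"
    by (simp add: basis_relax_def matrix_vector_right_distrib matrix_vector_mult_scaleR
        flip: scaleR_add_left)
qed

lemma basic_solution_add_mem_basis_relax:
  assumes "is_basis A b B" "A *v z = 0" "\<And>i. i \<notin> B \<Longrightarrow> 0 \<le> z $ i"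
  shows "basic_solution A b B + z \<in> basis_relax A b B"
  using assms basic_solution[OF assms(1)]
  by (auto simp: basis_relax_def matrix_vector_right_distrib)

lemma recc_basis_relaxD:
  assumes basis: "is_basis A b B" and d: "d \<in> recc (basis_relax A b B)"
  shows "A *v d = 0" and "\<And>i. i \<notin> B \<Longrightarrow> 0 \<le> d $ i"
proof -
  have "basic_solution A b B \<in> basis_relax A b B"
    using basic_solution_add_mem_basis_relax[OF basis, of 0] by simp
  from recc_memD[OF d this, of 1]
  have "A *v basic_solution A b B + A *v d = b"
    and "\<And>i. i \<notin> B \<Longrightarrow> 0 \<le> basic_solution A b B $ i + d $ i"
    by (simp_all add: basis_relax_def matrix_vector_right_distrib)
  then show "A *v d = 0" "\<And>i. i \<notin> B \<Longrightarrow> 0 \<le> d $ i"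
    using basic_solution[OF basis] by simp_all
qed

lemma basis_relax_subset:
  assumes basis: "is_basis A b B" and xb: "basic_solution A b B \<in> K"
    and rays: "\<And>j. j \<notin> B \<Longrightarrow> basis_ray A B j \<in> recc K"
  shows "basis_relax A b B \<subseteq> K"
proof
  fix x assume x: "x \<in> basis_relax A b B"
  define v where "v = x - basic_solution A b B"
  have "A *v v = 0" and "\<And>i. i \<notin> B \<Longrightarrow> 0 \<le> v $ i"
    using x basic_solution[OF basis] by (auto simp: v_def basis_relax_def matrix_vector_mult_diff_distrib)
  then have "v \<in> recc K"
    by (subst kernel_eq_sum_basis_rays[OF basis]) (auto intro!: recc_sum recc_scaleR rays)
  from recc_memD[OF this xb, of 1] show "x \<in> K" by (simp add: v_def)
qed

locale S_kC_setting =
  fixes A :: "real^'n^'m" and b :: "real^'m" and B :: "'n set" and C :: "(real^'n) set" and k :: 'n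
  assumes basis: "is_basis A b B"
    and recc_C: "recc C \<subseteq> recc (basis_relax A b B)"
    and k_N2: "k \<in> N2_set A b B C"
begin

abbreviation "xb \<equiv> basic_solution A b B"
abbreviation "r \<equiv> basis_ray A B"
abbreviation "P \<equiv> basis_relax A b B"
abbreviation "S \<equiv> S_kC A b B C k"
abbreviation "N2 \<equiv> N2_set A b B C"
abbreviation "J \<equiv> J_set A b B C k"
abbreviation "beta j \<equiv> beta_C C xb (r j)"
abbreviation "Y \<equiv> convex hull (\<Union>j\<in>N2. {t *\<^sub>R r j | t. 0 \<le> t \<and> ereal t < beta j})"

definition ray_bound :: "'n \<Rightarrow> real" where
  "ray_bound j = (if j \<in> N2 then real_of_ereal (beta j) else 0)"

lemma beta_N2: "j \<in> N2 \<Longrightarrow> 0 < beta j \<and> beta j < \<infinity>"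
  unfolding N2_set_def Let_def by (blast intro: order.strict_trans)

lemma ray_bound_nonneg: "0 \<le> ray_bound j"
  using beta_N2[of j] by (auto simp: ray_bound_def real_of_ereal_pos)

lemma k_nonbasic: "k \<notin> B"
  using k_N2 by (simp add: N2_set_def)

lemma ray_nth: "j \<notin> B \<Longrightarrow> i \<notin> B \<Longrightarrow> r j $ i = (if i = j then 1 else 0)"
  by (rule basis_ray(2)[OF basis])

lemma recc_C_kernel:
  assumes "d \<in> recc C"
  shows "A *v d = 0" and "\<And>i. i \<notin> B \<Longrightarrow> 0 \<le> d $ i"
  using recc_basis_relaxD[OF basis] recc_C assms by blast+

lemma segments_subset_box:
  "Y \<subseteq> {y. A *v y = 0 \<and> (\<forall>i. i \<notin> B \<longrightarrow> 0 \<le> y $ i \<and> y $ i \<le> ray_bound i)}"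
    (is "_ \<subseteq> ?box")
proof (rule hull_minimal)
  show "convex ?box"
  proof (rule convexI)
    fix x y and u v :: real
    assume x: "x \<in> ?box" and y: "y \<in> ?box" and uv: "0 \<le> u" "0 \<le> v" "u + v = 1"
    have "0 \<le> u * x $ i + v * y $ i \<and> u * x $ i + v * y $ i \<le> ray_bound i" if "i \<notin> B" for i
      using x y uv that by (simp add: convex_bound_le)
    with x y show "u *\<^sub>R x + v *\<^sub>R y \<in> ?box"
      by (simp add: matrix_vector_right_distrib matrix_vector_mult_scaleR)
  qed
  show "(\<Union>j\<in>N2. {t *\<^sub>R r j | t. 0 \<le> t \<and> ereal t < beta j}) \<subseteq> ?box"
  proof
    fix w assume "w \<in> (\<Union>j\<in>N2. {t *\<^sub>R r j | t. 0 \<le> t \<and> ereal t < beta j})"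
    then obtain j t where j: "j \<in> N2" and t: "0 \<le> t" "ereal t < beta j" and w: "w = t *\<^sub>R r j"
      by blast
    have "j \<notin> B" using j by (simp add: N2_set_def)
    moreover have "t \<le> ray_bound j"
      using beta_N2[OF j] t(2) j by (cases "beta j") (auto simp: ray_bound_def)
    ultimately show "w \<in> ?box"
      using w t ray_bound_nonneg by (auto simp: matrix_vector_mult_scaleR basis_ray[OF basis])
  qed
qed

lemma mem_S_iff:
  "z \<in> S \<longleftrightarrow> (\<exists>y \<mu> d. z = xb + y + \<mu> *\<^sub>R r k + d \<and> y \<in> Y \<and> \<mu> \<le> 0 \<and> d \<in> recc C)"
  unfolding S_kC_def by blast

lemma basic_solution_mem_S: "xb \<in> S"
proof -
  have "0 \<in> Y"
    using k_N2 beta_N2[OF k_N2]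
    by (intro hull_inc) (auto intro!: bexI[of _ k] exI[of _ 0] simp: zero_ereal_def)
  moreover have "0 \<in> recc C" by (simp add: recc_def)
  ultimately have "xb + 0 + 0 *\<^sub>R r k + 0 \<in> S"
    unfolding mem_S_iff by blast
  then show ?thesis by simp
qed

lemma recc_C_subset_recc_S: "recc C \<subseteq> recc S"
proof
  fix e assume e: "e \<in> recc C"
  show "e \<in> recc S"
    unfolding recc_def
  proof (intro CollectI ballI allI impI)
    fix z and t :: real assume "z \<in> S" "0 \<le> t"
    then obtain y \<mu> d where z: "z = xb + y + \<mu> *\<^sub>R r k + d" and "y \<in> Y" "\<mu> \<le> 0" "d \<in> recc C"
      unfolding mem_S_iff by blast
    moreover have "d + t *\<^sub>R e \<in> recc C"
      using \<open>d \<in> recc C\<close> e \<open>0 \<le> t\<close> by (simp add: recc_add recc_scaleR)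
    moreover have "z + t *\<^sub>R e = xb + y + \<mu> *\<^sub>R r k + (d + t *\<^sub>R e)"
      using z by (simp add: algebra_simps)
    ultimately show "z + t *\<^sub>R e \<in> S"
      unfolding mem_S_iff by blast
  qed
qed

lemma neg_ray_k_recc_S: "- r k \<in> recc S"
  unfolding recc_def
proof (intro CollectI ballI allI impI)
  fix z and t :: real assume "z \<in> S" "0 \<le> t"
  then obtain y \<mu> d where z: "z = xb + y + \<mu> *\<^sub>R r k + d" and "y \<in> Y" "\<mu> \<le> 0" "d \<in> recc C"
    unfolding mem_S_iff by blast
  moreover have "z + t *\<^sub>R (- r k) = xb + y + (\<mu> - t) *\<^sub>R r k + d"
    using z by (simp add: algebra_simps)
  moreover have "\<mu> - t \<le> 0" using \<open>\<mu> \<le> 0\<close> \<open>0 \<le> t\<close> by simp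
  ultimately show "z + t *\<^sub>R (- r k) \<in> S"
    unfolding mem_S_iff by blast
qed

lemma recc_S_if_agrees_off_k:
  assumes d: "d \<in> recc C" and w: "A *v w = 0"
    and coords: "\<And>i. i \<notin> B \<Longrightarrow> i \<noteq> k \<Longrightarrow> w $ i = d $ i" and k_coord: "w $ k \<le> d $ k"
  shows "w \<in> recc S"
proof -
  have "w = d + (d $ k - w $ k) *\<^sub>R (- r k)"
  proof (rule basis_eqI[OF basis])
    show "A *v w = A *v (d + (d $ k - w $ k) *\<^sub>R (- r k))"
      using w recc_C_kernel(1)[OF d] basis_ray(1)[OF basis k_nonbasic]
      by (simp add: matrix_vector_right_distrib matrix_vector_mult_diff_distrib matrix_vector_mult_scaleR)
    show "w $ i = (d + (d $ k - w $ k) *\<^sub>R (- r k)) $ i" if "i \<notin> B" for i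
      using coords[OF that] that k_nonbasic by (auto simp: ray_nth)
  qed
  also have "\<dots> \<in> recc S"
    using recc_C_subset_recc_S d neg_ray_k_recc_S k_coord
    by (intro recc_add recc_scaleR) auto
  finally show ?thesis .
qed

lemma S_memE:
  assumes "xb + z \<in> S"
  obtains d where "d \<in> recc C" and "\<And>i. i \<notin> B \<Longrightarrow> z $ i - ray_bound i \<le> d $ i"
    and "\<And>i. i \<notin> B \<Longrightarrow> i \<noteq> k \<Longrightarrow> d $ i \<le> z $ i"
proof -
  obtain y \<mu> d where e: "xb + z = xb + y + \<mu> *\<^sub>R r k + d"
    and "y \<in> Y" and \<mu>: "\<mu> \<le> 0" and d: "d \<in> recc C"
    using assms unfolding mem_S_iff by blast
  then have y: "0 \<le> y $ i \<and> y $ i \<le> ray_bound i" if "i \<notin> B" for i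
    using segments_subset_box that by blast
  have "d $ i = z $ i - y $ i - \<mu> * (if i = k then 1 else 0)" if "i \<notin> B" for i
    using arg_cong[OF e, of "\<lambda>v. v $ i"] that k_nonbasic by (simp add: ray_nth)
  with y \<mu> show ?thesis
    by (intro that[OF d]) (force split: if_splits)+
qed

lemma ray_k_notin_recc_C: "r k \<notin> recc C"
proof
  assume rk: "r k \<in> recc C"
  let ?T = "{t. 0 \<le> t \<and> xb + t *\<^sub>R r k \<in> C}"
  have "?T \<noteq> {}"
  proof
    assume "?T = {}"
    then have "beta k = Sup (ereal ` {})" unfolding beta_C_def by (simp only:)
    then have "beta k = -\<infinity>" by (simp add: bot_ereal_def)
    then show False using beta_N2[OF k_N2] by simp
  qed
  then obtain t0 where t0: "0 \<le> t0" "xb + t0 *\<^sub>R r k \<in> C" by blast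
  have "ereal x \<le> beta k" for x
  proof -
    have "(xb + t0 *\<^sub>R r k) + \<bar>x\<bar> *\<^sub>R r k \<in> C" using recc_memD[OF rk t0(2)] by simp
    then have "t0 + \<bar>x\<bar> \<in> ?T" using t0 by (simp add: algebra_simps)
    then have "ereal (t0 + \<bar>x\<bar>) \<le> beta k" unfolding beta_C_def by (auto intro: Sup_upper)
    then show ?thesis using t0 by (simp add: order.trans[rotated])
  qed
  then have "beta k = \<infinity>" by (rule ereal_top)
  then show False using beta_N2[OF k_N2] by simp
qed

lemma far_ray_k_notin_S:
  assumes t: "ray_bound k < t"
  shows "xb + t *\<^sub>R r k \<notin> S"
proof
  assume "xb + t *\<^sub>R r k \<in> S"
  then obtain d where d: "d \<in> recc C"
    and lower: "\<And>i. i \<notin> B \<Longrightarrow> (t *\<^sub>R r k) $ i - ray_bound i \<le> d $ i"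
    and upper: "\<And>i. i \<notin> B \<Longrightarrow> i \<noteq> k \<Longrightarrow> d $ i \<le> (t *\<^sub>R r k) $ i"
    using S_memE by blast
  define c where "c = d $ k"
  have pos: "0 < c" using lower[OF k_nonbasic] t k_nonbasic by (simp add: c_def ray_nth)
  have "d = c *\<^sub>R r k"
  proof (rule basis_eqI[OF basis])
    show "A *v d = A *v (c *\<^sub>R r k)"
      using recc_C_kernel(1)[OF d] basis_ray(1)[OF basis k_nonbasic] by (simp add: matrix_vector_mult_scaleR)
    show "d $ i = (c *\<^sub>R r k) $ i" if "i \<notin> B" for i
      using upper[OF that] recc_C_kernel(2)[OF d that] that k_nonbasic by (auto simp: c_def ray_nth)
  qed
  with d pos ray_k_notin_recc_C show False by (simp add: recc_scaleR_pos_iff)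
qed

lemma k_notin_J: "k \<notin> J"
proof
  assume "k \<in> J"
  then have "xb + (ray_bound k + 1) *\<^sub>R r k \<in> S"
    using recc_memD[OF _ basic_solution_mem_S] ray_bound_nonneg[of k] by (simp add: J_set_def)
  then show False using far_ray_k_notin_S[of "ray_bound k + 1"] by simp
qed

lemma far_ray_notin_S:
  assumes j: "j \<notin> B" "j \<notin> J" and t: "ray_bound j < t"
  shows "xb + t *\<^sub>R r j \<notin> S"
proof (cases "j = k")
  case True with far_ray_k_notin_S t show ?thesis by simp
next
  case False
  show ?thesis
  proof
    assume "xb + t *\<^sub>R r j \<in> S"
    then obtain d where d: "d \<in> recc C"
      and lower: "\<And>i. i \<notin> B \<Longrightarrow> (t *\<^sub>R r j) $ i - ray_bound i \<le> d $ i"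
      and upper: "\<And>i. i \<notin> B \<Longrightarrow> i \<noteq> k \<Longrightarrow> d $ i \<le> (t *\<^sub>R r j) $ i"
      using S_memE by blast
    have pos: "0 < d $ j" using lower[OF j(1)] t j(1) by (simp add: ray_nth)
    have "d $ j *\<^sub>R r j \<in> recc S"
    proof (rule recc_S_if_agrees_off_k[OF d])
      show "A *v (d $ j *\<^sub>R r j) = 0" using basis_ray(1)[OF basis j(1)] by (simp add: matrix_vector_mult_scaleR)
      show "(d $ j *\<^sub>R r j) $ i = d $ i" if "i \<notin> B" "i \<noteq> k" for i
        using upper[OF that] recc_C_kernel(2)[OF d that(1)] that j(1) by (auto simp: ray_nth)
      show "(d $ j *\<^sub>R r j) $ k \<le> d $ k"
        using recc_C_kernel(2)[OF d k_nonbasic] j(1) k_nonbasic False by (simp add: ray_nth)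
    qed
    then have "r j \<in> recc S" using pos by (simp add: recc_scaleR_pos_iff)
    then show False using j by (simp add: J_set_def)
  qed
qed

lemma far_pair_notin_S:
  assumes j: "j \<in> J" and j': "j' \<notin> B" "j' \<notin> J"
    and no_pair: "\<And>g. 0 < g \<Longrightarrow> r j + g *\<^sub>R r j' \<notin> recc S"
    and g: "0 < g" and t: "ray_bound j < t" "ray_bound j' < t * g"
  shows "xb + t *\<^sub>R (r j + g *\<^sub>R r j') \<notin> S"
proof
  let ?z = "t *\<^sub>R (r j + g *\<^sub>R r j')"
  have jB: "j \<notin> B" using j by (simp add: J_set_def)
  have "j \<noteq> k" "j \<noteq> j'" using j j' k_notin_J by auto
  then have z: "?z $ i = (if i = j then t else 0) + (if i = j' then t * g else 0)" if "i \<notin> B" for i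
    using that jB j' by (simp add: ray_nth)
  assume "xb + ?z \<in> S"
  then obtain d where d: "d \<in> recc C"
    and lower: "\<And>i. i \<notin> B \<Longrightarrow> ?z $ i - ray_bound i \<le> d $ i"
    and upper: "\<And>i. i \<notin> B \<Longrightarrow> i \<noteq> k \<Longrightarrow> d $ i \<le> ?z $ i"
    using S_memE by blast
  have pos: "0 < d $ j" "0 < d $ j'"
    using lower[OF jB] lower[OF j'(1)] z[OF jB] z[OF j'(1)] t \<open>j \<noteq> j'\<close> by auto
  let ?w = "d $ j *\<^sub>R r j + d $ j' *\<^sub>R r j'"
  have "?w \<in> recc S"
  proof (rule recc_S_if_agrees_off_k[OF d])
    show "A *v ?w = 0"
      using basis_ray(1)[OF basis jB] basis_ray(1)[OF basis j'(1)]
      by (simp add: matrix_vector_right_distrib matrix_vector_mult_scaleR)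
    show "?w $ i = d $ i" if "i \<notin> B" "i \<noteq> k" for i
      using upper[OF that] z[OF that(1)] recc_C_kernel(2)[OF d that(1)] that jB j'(1) \<open>j \<noteq> j'\<close>
      by (auto simp: ray_nth)
    show "?w $ k \<le> d $ k"
      using recc_C_kernel(2)[OF d k_nonbasic] jB j'(1) k_nonbasic \<open>j \<noteq> k\<close> by (auto simp: ray_nth)
  qed
  then have "(1 / d $ j) *\<^sub>R ?w \<in> recc S" using pos by (simp add: recc_scaleR_pos_iff)
  moreover have "(1 / d $ j) *\<^sub>R ?w = r j + (d $ j' / d $ j) *\<^sub>R r j'"
    using pos by (simp add: scaleR_add_right)
  ultimately show False using no_pair[of "d $ j' / d $ j"] pos by simp
qed

lemma ray_mem_P: "j \<notin> B \<Longrightarrow> 0 \<le> s \<Longrightarrow> xb + s *\<^sub>R r j \<in> P"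
  by (rule basic_solution_add_mem_basis_relax[OF basis])
     (simp_all add: basis_ray[OF basis] matrix_vector_mult_scaleR)

lemma ray_recc_superset_notin_J:
  assumes Q: "closed Q" "convex Q" and PS: "P - S \<subseteq> Q" and j: "j \<notin> B" "j \<notin> J"
  shows "r j \<in> recc Q"
proof (rule recc_if_halfline[OF Q])
  fix s assume "ray_bound j + 1 \<le> s"
  then have "xb + s *\<^sub>R r j \<in> P - S"
    using ray_mem_P[OF j(1)] far_ray_notin_S[OF j] ray_bound_nonneg[of j] by simp
  with PS show "xb + s *\<^sub>R r j \<in> Q" by blast
qed

lemma ray_recc_superset:
  assumes Q: "closed Q" "convex Q" and PS: "P - S \<subseteq> Q"
    and M': "M'_set A b B C k = {}" and j: "j \<notin> B"
  shows "r j \<in> recc Q"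
proof (cases "j \<in> J")
  case False
  with ray_recc_superset_notin_J[OF Q PS j] show ?thesis .
next
  case True
  then obtain j' where j': "j' \<notin> B" "j' \<notin> J" and "\<not> 0 < gamma' A b B C k j j'"
    using M' unfolding M'_set_def by blast
  have no_pair: "r j + g *\<^sub>R r j' \<notin> recc S" if g: "0 < g" for g
  proof
    assume "r j + g *\<^sub>R r j' \<in> recc S"
    have "(0::ereal) < ereal g" using g by simp
    also have "ereal g \<le> gamma' A b B C k j j'"
      unfolding gamma'_def using g \<open>r j + g *\<^sub>R r j' \<in> recc S\<close> by (intro Sup_upper) auto
    finally show False
      using \<open>\<not> 0 < gamma' A b B C k j j'\<close> by simp
  qed
  have pair: "r j + g *\<^sub>R r j' \<in> recc Q" if g: "0 < g" for g
  proof (rule recc_if_halfline[OF Q])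
    fix s assume s: "ray_bound j + ray_bound j' / g + 1 \<le> s"
    have "0 \<le> ray_bound j' / g" using ray_bound_nonneg g by simp
    with s have "ray_bound j < s" "ray_bound j' / g < s"
      using ray_bound_nonneg[of j] by linarith+
    then have "ray_bound j < s" "ray_bound j' < s * g"
      using g by (simp_all add: pos_divide_less_eq)
    moreover have "xb + s *\<^sub>R (r j + g *\<^sub>R r j') \<in> P"
      using j j' g s \<open>0 \<le> ray_bound j' / g\<close> ray_bound_nonneg[of j]
      by (intro basic_solution_add_mem_basis_relax[OF basis])
         (auto simp: basis_ray[OF basis] matrix_vector_right_distrib matrix_vector_mult_scaleR)
    ultimately show "xb + s *\<^sub>R (r j + g *\<^sub>R r j') \<in> Q"
      using far_pair_notin_S[OF True j' no_pair g] PS by blast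
  qed
  have "\<forall>\<^sub>F g in at_right 0. r j + g *\<^sub>R r j' \<in> recc Q"
    using eventually_at_right_less by (rule eventually_mono) (rule pair)
  with closed_recc[OF Q(1)] show ?thesis
    by (rule closed_mem_if_eventually_at_right)
qed

lemma basic_solution_mem_superset:
  assumes Q: "closed Q" and PS: "P - S \<subseteq> Q" and N0: "\<not> N0_set A b B C \<subseteq> J"
  shows "xb \<in> Q"
proof -
  obtain j where j: "j \<in> N0_set A b B C" "j \<notin> J" using N0 by blast
  then have jB: "j \<notin> B" and "j \<notin> N2"
    by (auto simp: N0_set_def N2_set_def Let_def)
  then have "ray_bound j = 0" by (simp add: ray_bound_def)
  then have mem: "xb + e *\<^sub>R r j \<in> Q" if "0 < e" for e
    using that ray_mem_P[OF jB] far_ray_notin_S[OF jB j(2)] PS by auto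
  have "\<forall>\<^sub>F e in at_right 0. xb + e *\<^sub>R r j \<in> Q"
    using eventually_at_right_less by (rule eventually_mono) (rule mem)
  with Q show ?thesis
    by (rule closed_mem_if_eventually_at_right)
qed

end

theorem proposition10:
  fixes A :: "real^'n^'m" and b :: "real^'m" and B :: "'n set"
    and C :: "(real^'n) set" and k :: 'n
  assumes "rank A = CARD('m)"
    and "is_basis A b B"
    and "open C" and "convex C"
    and "basic_solution A b B \<notin> closure C"
    and "recc C \<subseteq> recc (basis_relax A b B)"
    and "k \<in> N2_set A b B C"
    and "\<not> N0_set A b B C \<subseteq> J_set A b B C k"
    and "M'_set A b B C k = {}"
  shows "closure (convex hull (basis_relax A b B - S_kC A b B C k)) = basis_relax A b B"
proof -
  interpret S_kC_setting A b B C k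
    using assms(2,6,7) by unfold_locales
  let ?Q = "closure (convex hull (P - S))"
  have Q: "closed ?Q" "convex ?Q"
    by (simp_all add: convex_closure convex_convex_hull)
  have PS: "P - S \<subseteq> ?Q"
    using hull_subset[of "P - S" convex] closure_subset by (rule subset_trans)
  have "?Q \<subseteq> P"
    by (intro closure_minimal hull_minimal Diff_subset convex_basis_relax closed_basis_relax)
  moreover have "P \<subseteq> ?Q"
    using basis basic_solution_mem_superset[OF Q(1) PS assms(8)] ray_recc_superset[OF Q PS assms(9)]
    by (rule basis_relax_subset)
  ultimately show ?thesis by blast
qed

end
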